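(* A finitely generated group with the Powers property is not presentable by a product.
   Context: (de la Harpe) A group $\Gamma\neq\{1\}$ is a Powers group (has the Powers property) if for every finite subset $F\subset\Gamma\setminus\{1\}$ and every integer $N\ge 1$ there exist a partition $\Gamma=D\sqcup E$ and elements $\gamma_1,\dots,\gamma_N\in\Gamma$ such that $fD\cap D=\emptyset$ for all $f\in F$ and $\gamma_jE\cap\gamma_kE=\emptyset$ for all $j\neq k$. An infinite group $\Gamma$ is not presentable by a product if for every homomorphism $\varphi\colon \Gamma_1\times\Gamma_2\to\Gamma$ whose image has finite index in $\Gamma$, at least one of $\varphi(\Gamma_1)$, $\varphi(\Gamma_2)$ is finite. *)

theory Defs
  imports "HOL-Algebra.Algebra"
begin

definition fin_gen_group :: "('a, 'b) monoid_scheme \<Rightarrow> bool" where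
  "fin_gen_group G \<longleftrightarrow> group G \<and>
     (\<exists>S. finite S \<and> S \<subseteq> carrier G \<and> generate G S = carrier G)"

definition powers_group :: "('a, 'b) monoid_scheme \<Rightarrow> bool" where
  "powers_group G \<longleftrightarrow> group G \<and> carrier G \<noteq> {\<one>\<^bsub>G\<^esub>} \<and>
     (\<forall>F N. finite F \<and> F \<subseteq> carrier G - {\<one>\<^bsub>G\<^esub>} \<and> N \<ge> (1::nat) \<longrightarrow>
        (\<exists>D E (\<gamma>::nat \<Rightarrow> 'a).
            D \<subseteq> carrier G \<and> E \<subseteq> carrier G \<and> D \<union> E = carrier G \<and> D \<inter> E = {} \<and>
            (\<forall>j<N. \<gamma> j \<in> carrier G) \<and>
            (\<forall>f\<in>F. (f <#\<^bsub>G\<^esub> D) \<inter> D = {}) \<and>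
            (\<forall>j<N. \<forall>k<N. j \<noteq> k \<longrightarrow> (\<gamma> j <#\<^bsub>G\<^esub> E) \<inter> (\<gamma> k <#\<^bsub>G\<^esub> E) = {})))"

end

theory Submission
  imports Defs
begin

text \<open>
  If \<open>a D \<inter> D = \<emptyset>\<close> for a partition \<open>G = D \<union> E\<close>, the conjugate \<open>g a g\<inverse>\<close> maps everything
  outside \<open>g E\<close> into \<open>g E\<close>; two such conjugates whose target translates are disjoint
  therefore cannot commute (ping-pong on a point outside both translates). Given nontrivial
  \<open>a, b\<close> and a subgroup \<open>H\<close> of finite index, ask the Powers property for more pairwise
  disjoint translates \<open>\<gamma>\<^sub>j E\<close> than there are cosets of \<open>H\<close>: two of them satisfy
  \<open>\<gamma>\<^sub>k = \<gamma>\<^sub>i \<delta>\<close> with \<open>\<delta> \<in> H\<close>, and a third one supplies the ping-pong point. Hence \<open>a\<close>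
  does not commute with \<open>\<delta> b \<delta>\<inverse>\<close>. If \<open>H\<close> is the image of \<open>G\<^sub>1 \<times> G\<^sub>2\<close>, however, every
  element of the image of \<open>G\<^sub>1\<close> commutes with every \<open>H\<close>-conjugate of an element of the image
  of \<open>G\<^sub>2\<close>, so one of these images is trivial. With \<open>H = 1\<close> and \<open>a = b\<close> the same argument
  shows that a Powers group is infinite.
\<close>

\<comment> \<open>The ASCII syntax for strict multiset inclusion clashes with left cosets.\<close>
no_notation (ASCII) subset_mset (infix \<open><#\<close> 50)

context group
begin

lemma l_coset_disjoint_imp_proper:
  assumes "a \<in> carrier G" "(a <# D) \<inter> D = {}"
  shows "D \<noteq> carrier G"
proof
  assume "D = carrier G"
  then have "a \<otimes> \<one> \<in> (a <# D) \<inter> D" using assms(1) unfolding l_coset_def by auto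
  with assms show False by simp
qed

lemma conj_ping_pong:
  assumes "D \<union> E = carrier G" "D \<inter> E = {}"
    and "a \<in> carrier G" "(a <# D) \<inter> D = {}"
    and "g \<in> carrier G" "x \<in> carrier G - (g <# E)"
  shows "g \<otimes> a \<otimes> inv g \<otimes> x \<in> g <# E"
proof -
  have "x = g \<otimes> (inv g \<otimes> x)" using assms(5,6) by (simp add: m_assoc[symmetric])
  then have "inv g \<otimes> x \<in> D" using assms(1,5,6) unfolding l_coset_def by blast
  then have "a \<otimes> (inv g \<otimes> x) \<in> E" using assms(1-6) unfolding l_coset_def by blast
  moreover have "g \<otimes> a \<otimes> inv g \<otimes> x = g \<otimes> (a \<otimes> (inv g \<otimes> x))"
    using assms(3,5,6) by (simp add: m_assoc)
  ultimately show ?thesis unfolding l_coset_def by blast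
qed

lemma ping_pong_not_commute:
  assumes "u \<in> carrier G" "v \<in> carrier G"
    and "\<And>y. y \<in> carrier G - A \<Longrightarrow> u \<otimes> y \<in> A"
    and "\<And>y. y \<in> carrier G - B \<Longrightarrow> v \<otimes> y \<in> B"
    and "A \<inter> B = {}" "x \<in> carrier G - (A \<union> B)"
  shows "u \<otimes> v \<noteq> v \<otimes> u"
proof
  assume comm: "u \<otimes> v = v \<otimes> u"
  have "u \<otimes> x \<in> A" "v \<otimes> x \<in> B" using assms(3,4,6) by auto
  then have "u \<otimes> x \<in> carrier G - B" "v \<otimes> x \<in> carrier G - A" using assms(1,2,5,6) by auto
  then have "v \<otimes> (u \<otimes> x) \<in> B" "u \<otimes> (v \<otimes> x) \<in> A" using assms(3,4) by blast+
  moreover have "v \<otimes> (u \<otimes> x) = u \<otimes> (v \<otimes> x)"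
    using assms(1,2,6) comm by (simp add: m_assoc[symmetric])
  ultimately show False using assms(5) by auto
qed

lemma conj_commute:
  assumes "a \<in> carrier G" "b \<in> carrier G" "g \<in> carrier G" "a \<otimes> b = b \<otimes> a"
  shows "(g \<otimes> a \<otimes> inv g) \<otimes> (g \<otimes> b \<otimes> inv g) = (g \<otimes> b \<otimes> inv g) \<otimes> (g \<otimes> a \<otimes> inv g)"
  using assms by (simp add: m_assoc[symmetric]) (simp add: m_assoc)

lemma conj_mult:
  assumes "g \<in> carrier G" "h \<in> carrier G" "b \<in> carrier G"
  shows "g \<otimes> h \<otimes> b \<otimes> inv (g \<otimes> h) = g \<otimes> (h \<otimes> b \<otimes> inv h) \<otimes> inv g"
  using assms by (simp add: inv_mult_group m_assoc)

lemma finite_rcosets_pigeonhole: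
  assumes H: "subgroup H G" "finite (rcosets H)"
    and \<gamma>: "\<And>j. j < n \<Longrightarrow> \<gamma> j \<in> carrier G" and n: "card (rcosets H) < n"
  obtains i k where "i < n" "k < n" "i \<noteq> k" "inv (\<gamma> i) \<otimes> \<gamma> k \<in> H"
proof -
  define c where "c j = H #> inv (\<gamma> j)" for j
  have "c ` {..<n} \<subseteq> rcosets H"
    unfolding c_def using \<gamma> subgroup.subset[OF H(1)] by (simp add: image_subset_iff rcosetsI)
  then have "card (c ` {..<n}) \<le> card (rcosets H)" by (rule card_mono[OF H(2)])
  with n have "card (c ` {..<n}) < card {..<n}" by simp
  then have "\<not> inj_on c {..<n}" by (rule pigeonhole)
  then obtain i k where ik: "i < n" "k < n" "i \<noteq> k" "c i = c k"
    unfolding inj_on_def by blast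
  then have "inv (\<gamma> i) \<in> H #> inv (\<gamma> k)"
    using rcos_self[OF inv_closed[OF \<gamma>[OF ik(1)]] H(1)] unfolding c_def by simp
  then have "inv (\<gamma> i) \<otimes> inv (inv (\<gamma> k)) \<in> H"
    by (rule subgroup.rcos_module_imp[OF H(1) is_group inv_closed[OF \<gamma>[OF ik(2)]]])
  with ik \<gamma> that show ?thesis by simp
qed

end

lemma hom_DirProd_conj_commute:
  assumes "group G1" "group G2" "group G" "\<phi> \<in> hom (G1 \<times>\<times> G2) G"
    and x: "x \<in> carrier G1" and y: "y \<in> carrier G2" and "\<delta> \<in> \<phi> ` carrier (G1 \<times>\<times> G2)"
  shows "\<phi> (x, \<one>\<^bsub>G2\<^esub>) \<otimes>\<^bsub>G\<^esub> (\<delta> \<otimes>\<^bsub>G\<^esub> \<phi> (\<one>\<^bsub>G1\<^esub>, y) \<otimes>\<^bsub>G\<^esub> inv\<^bsub>G\<^esub> \<delta>)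
       = (\<delta> \<otimes>\<^bsub>G\<^esub> \<phi> (\<one>\<^bsub>G1\<^esub>, y) \<otimes>\<^bsub>G\<^esub> inv\<^bsub>G\<^esub> \<delta>) \<otimes>\<^bsub>G\<^esub> \<phi> (x, \<one>\<^bsub>G2\<^esub>)"
proof -
  interpret G1: group G1 by fact
  interpret G2: group G2 by fact
  interpret h: group_hom "G1 \<times>\<times> G2" G \<phi>
    using assms(3,4) DirProd_group[OF assms(1,2)] by (simp add: group_hom_def group_hom_axioms_def)
  obtain p q where pq: "p \<in> carrier G1" "q \<in> carrier G2" "\<delta> = \<phi> (p, q)"
    using assms(7) by auto
  define z where "z = q \<otimes>\<^bsub>G2\<^esub> y \<otimes>\<^bsub>G2\<^esub> inv\<^bsub>G2\<^esub> q"
  have z: "z \<in> carrier G2" using pq y by (simp add: z_def)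
  have "\<delta> \<otimes>\<^bsub>G\<^esub> \<phi> (\<one>\<^bsub>G1\<^esub>, y) = \<phi> (p, q \<otimes>\<^bsub>G2\<^esub> y)"
    using pq y h.hom_mult[of "(p, q)" "(\<one>\<^bsub>G1\<^esub>, y)"] by simp
  moreover have "inv\<^bsub>G\<^esub> \<delta> = \<phi> (inv\<^bsub>G1\<^esub> p, inv\<^bsub>G2\<^esub> q)"
    using pq h.hom_inv[of "(p, q)"] inv_DirProd[OF assms(1,2)] by simp
  ultimately have conj: "\<delta> \<otimes>\<^bsub>G\<^esub> \<phi> (\<one>\<^bsub>G1\<^esub>, y) \<otimes>\<^bsub>G\<^esub> inv\<^bsub>G\<^esub> \<delta> = \<phi> (\<one>\<^bsub>G1\<^esub>, z)"
    using pq y h.hom_mult[of "(p, q \<otimes>\<^bsub>G2\<^esub> y)" "(inv\<^bsub>G1\<^esub> p, inv\<^bsub>G2\<^esub> q)"] by (simp add: z_def)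
  have "\<phi> (x, \<one>\<^bsub>G2\<^esub>) \<otimes>\<^bsub>G\<^esub> \<phi> (\<one>\<^bsub>G1\<^esub>, z) = \<phi> (x, z)"
       "\<phi> (\<one>\<^bsub>G1\<^esub>, z) \<otimes>\<^bsub>G\<^esub> \<phi> (x, \<one>\<^bsub>G2\<^esub>) = \<phi> (x, z)"
    using x z by (simp_all flip: h.hom_mult)
  then show ?thesis by (simp add: conj)
qed

lemma powers_group_imp_group: "powers_group G \<Longrightarrow> group G"
  unfolding powers_group_def by (elim conjE)

lemma powers_group_nontrivial:
  assumes "powers_group G"
  obtains a where "a \<in> carrier G - {\<one>\<^bsub>G\<^esub>}"
proof -
  have "carrier G \<noteq> {\<one>\<^bsub>G\<^esub>}" using assms unfolding powers_group_def by (elim conjE)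
  with powers_group_imp_group[OF assms] show ?thesis using that monoid.one_closed[OF group.is_monoid] by blast
qed

lemma powers_groupE:
  assumes "powers_group G" "finite F" "F \<subseteq> carrier G - {\<one>\<^bsub>G\<^esub>}" "N \<ge> 1"
  obtains D E and \<gamma> :: "nat \<Rightarrow> 'a" where
    "D \<union> E = carrier G" "D \<inter> E = {}"
    "\<forall>j<N. \<gamma> j \<in> carrier G" "\<forall>f\<in>F. (f <#\<^bsub>G\<^esub> D) \<inter> D = {}"
    "\<forall>j<N. \<forall>k<N. j \<noteq> k \<longrightarrow> (\<gamma> j <#\<^bsub>G\<^esub> E) \<inter> (\<gamma> k <#\<^bsub>G\<^esub> E) = {}"
proof -
  have "\<exists>D E (\<gamma> :: nat \<Rightarrow> 'a). D \<subseteq> carrier G \<and> E \<subseteq> carrier G \<and> D \<union> E = carrier G \<and> D \<inter> E = {} \<and>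
      (\<forall>j<N. \<gamma> j \<in> carrier G) \<and> (\<forall>f\<in>F. (f <#\<^bsub>G\<^esub> D) \<inter> D = {}) \<and>
      (\<forall>j<N. \<forall>k<N. j \<noteq> k \<longrightarrow> (\<gamma> j <#\<^bsub>G\<^esub> E) \<inter> (\<gamma> k <#\<^bsub>G\<^esub> E) = {})"
    using assms unfolding powers_group_def by (elim conjE) (drule spec[of _ F], drule spec[of _ N], simp)
  then show ?thesis by (elim exE conjE) (rule that; assumption)
qed

lemma powers_group_noncommuting_conjugate:
  fixes G (structure)
  assumes P: "powers_group G" and H: "subgroup H G" "finite (rcosets H)"
    and a: "a \<in> carrier G - {\<one>}" and b: "b \<in> carrier G - {\<one>}"
  shows "\<exists>\<delta>\<in>H. a \<otimes> (\<delta> \<otimes> b \<otimes> inv \<delta>) \<noteq> (\<delta> \<otimes> b \<otimes> inv \<delta>) \<otimes> a"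
proof -
  interpret group G by (rule powers_group_imp_group[OF P])
  define m where "m = card (rcosets H)"
  have F: "finite {a, b}" "{a, b} \<subseteq> carrier G - {\<one>}" "m + 2 \<ge> 1" using a b by auto
  obtain D E and \<gamma> :: "nat \<Rightarrow> 'a" where DE: "D \<union> E = carrier G" "D \<inter> E = {}"
    and \<gamma>: "\<forall>j<m + 2. \<gamma> j \<in> carrier G"
    and ab: "\<forall>f\<in>{a, b}. (f <# D) \<inter> D = {}"
    and disj: "\<forall>j<m + 2. \<forall>k<m + 2. j \<noteq> k \<longrightarrow> (\<gamma> j <# E) \<inter> (\<gamma> k <# E) = {}"
    by (rule powers_groupE[OF P F])
  have aD: "(a <# D) \<inter> D = {}" and bD: "(b <# D) \<inter> D = {}" using ab by auto
  obtain i k where ik: "i < m + 1" "k < m + 1" "i \<noteq> k" and \<delta>: "inv (\<gamma> i) \<otimes> \<gamma> k \<in> H"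
    using finite_rcosets_pigeonhole[OF H, of "m + 1" \<gamma>] \<gamma> unfolding m_def by auto
  define \<delta> where "\<delta> = inv (\<gamma> i) \<otimes> \<gamma> k"
  have carr: "\<gamma> i \<in> carrier G" "\<gamma> k \<in> carrier G" "\<delta> \<in> carrier G" "a \<in> carrier G" "b \<in> carrier G"
    using \<gamma> ik a b by (auto simp: \<delta>_def)
  have k: "\<gamma> k = \<gamma> i \<otimes> \<delta>" using carr by (simp add: \<delta>_def m_assoc[symmetric])
  have ik_disj: "(\<gamma> i <# E) \<inter> (\<gamma> k <# E) = {}" using disj ik by simp
  obtain e where e: "e \<in> E" using l_coset_disjoint_imp_proper[OF carr(4) aD] DE by blast
  have x: "\<gamma> (m + 1) \<otimes> e \<in> carrier G - ((\<gamma> i <# E) \<union> (\<gamma> k <# E))"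
  proof -
    have "\<gamma> (m + 1) \<otimes> e \<in> \<gamma> (m + 1) <# E" using e unfolding l_coset_def by blast
    moreover have "(\<gamma> (m + 1) <# E) \<inter> (\<gamma> i <# E) = {}" "(\<gamma> (m + 1) <# E) \<inter> (\<gamma> k <# E) = {}"
      using disj ik by auto
    ultimately show ?thesis using \<gamma> e DE by auto
  qed
  have "(\<gamma> i \<otimes> a \<otimes> inv (\<gamma> i)) \<otimes> (\<gamma> k \<otimes> b \<otimes> inv (\<gamma> k))
      \<noteq> (\<gamma> k \<otimes> b \<otimes> inv (\<gamma> k)) \<otimes> (\<gamma> i \<otimes> a \<otimes> inv (\<gamma> i))"
    by (rule ping_pong_not_commute[OF _ _ conj_ping_pong[OF DE carr(4) aD carr(1)]
          conj_ping_pong[OF DE carr(5) bD carr(2)] ik_disj x]) (use carr in auto)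
  then have "a \<otimes> (\<delta> \<otimes> b \<otimes> inv \<delta>) \<noteq> (\<delta> \<otimes> b \<otimes> inv \<delta>) \<otimes> a"
    using conj_commute[of a "\<delta> \<otimes> b \<otimes> inv \<delta>" "\<gamma> i"] carr by (auto simp: k conj_mult)
  with \<delta> show ?thesis unfolding \<delta>_def by blast
qed

lemma powers_group_infinite:
  fixes G (structure)
  assumes P: "powers_group G"
  shows "infinite (carrier G)"
proof
  assume fin: "finite (carrier G)"
  interpret group G by (rule powers_group_imp_group[OF P])
  obtain a where a: "a \<in> carrier G - {\<one>}" by (rule powers_group_nontrivial[OF P])
  have "finite (rcosets {\<one>})"
    using rcosets_subset_PowG[OF triv_subgroup] fin by (simp add: finite_subset)
  then show False
    using powers_group_noncommuting_conjugate[OF P triv_subgroup _ a a] a by auto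
qed

lemma powers_group_no_product:
  assumes P: "powers_group G" and "group G1" "group G2" and \<phi>: "\<phi> \<in> hom (G1 \<times>\<times> G2) G"
    and fin: "finite (rcosets\<^bsub>G\<^esub> (\<phi> ` carrier (G1 \<times>\<times> G2)))"
  shows "(\<forall>x\<in>carrier G1. \<phi> (x, \<one>\<^bsub>G2\<^esub>) = \<one>\<^bsub>G\<^esub>) \<or> (\<forall>y\<in>carrier G2. \<phi> (\<one>\<^bsub>G1\<^esub>, y) = \<one>\<^bsub>G\<^esub>)"
proof (rule ccontr)
  assume "\<not> ?thesis"
  then obtain x y where x: "x \<in> carrier G1" "\<phi> (x, \<one>\<^bsub>G2\<^esub>) \<noteq> \<one>\<^bsub>G\<^esub>"
    and y: "y \<in> carrier G2" "\<phi> (\<one>\<^bsub>G1\<^esub>, y) \<noteq> \<one>\<^bsub>G\<^esub>" by blast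
  have G: "group G" by (rule powers_group_imp_group[OF P])
  interpret G1: group G1 by fact
  interpret G2: group G2 by fact
  interpret h: group_hom "G1 \<times>\<times> G2" G \<phi>
    using G \<phi> DirProd_group[OF assms(2,3)] by (simp add: group_hom_def group_hom_axioms_def)
  have "\<phi> (x, \<one>\<^bsub>G2\<^esub>) \<in> carrier G - {\<one>\<^bsub>G\<^esub>}" "\<phi> (\<one>\<^bsub>G1\<^esub>, y) \<in> carrier G - {\<one>\<^bsub>G\<^esub>}"
    using x y by (simp_all add: h.hom_closed)
  then show False
    using powers_group_noncommuting_conjugate[OF P h.img_is_subgroup fin]
      hom_DirProd_conj_commute[OF assms(2,3) G \<phi> x(1) y(1)] by blast
qed

theorem proposition5p1:
  fixes G :: "('a, 'm) monoid_scheme"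
  assumes "fin_gen_group G" and "powers_group G"
  shows "infinite (carrier G) \<and>
    (\<forall>(G1 :: ('b, 'm1) monoid_scheme) (G2 :: ('c, 'm2) monoid_scheme) \<phi>.
       group G1 \<and> group G2 \<and> \<phi> \<in> hom (G1 \<times>\<times> G2) G \<and>
       finite (rcosets\<^bsub>G\<^esub> (\<phi> ` carrier (G1 \<times>\<times> G2))) \<longrightarrow>
       finite ((\<lambda>x. \<phi> (x, \<one>\<^bsub>G2\<^esub>)) ` carrier G1) \<or>
       finite ((\<lambda>y. \<phi> (\<one>\<^bsub>G1\<^esub>, y)) ` carrier G2))"
proof (intro conjI allI impI)
  show "infinite (carrier G)" using powers_group_infinite[OF assms(2)] .
next
  fix G1 :: "('b, 'm1) monoid_scheme" and G2 :: "('c, 'm2) monoid_scheme" and \<phi>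
  assume "group G1 \<and> group G2 \<and> \<phi> \<in> hom (G1 \<times>\<times> G2) G \<and>
       finite (rcosets\<^bsub>G\<^esub> (\<phi> ` carrier (G1 \<times>\<times> G2)))"
  then have "(\<lambda>x. \<phi> (x, \<one>\<^bsub>G2\<^esub>)) ` carrier G1 \<subseteq> {\<one>\<^bsub>G\<^esub>} \<or>
             (\<lambda>y. \<phi> (\<one>\<^bsub>G1\<^esub>, y)) ` carrier G2 \<subseteq> {\<one>\<^bsub>G\<^esub>}"
    using powers_group_no_product[OF assms(2)] by blast
  then show "finite ((\<lambda>x. \<phi> (x, \<one>\<^bsub>G2\<^esub>)) ` carrier G1) \<or>
             finite ((\<lambda>y. \<phi> (\<one>\<^bsub>G1\<^esub>, y)) ` carrier G2)"
    using finite_subset by blast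
qed

end
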